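(* Let $H$ be a separable complex Hilbert space and let $\mathcal{U}$ be a unitary system on $H$. If $\psi_1,\psi_2\in\mathcal{W}(\mathcal{U})$, then $\psi_1+\lambda\psi_2\in\mathcal{RW}(\mathcal{U})$ for every complex scalar $\lambda$ with $|\lambda|\neq 1$. More generally, if $\psi_1,\psi_2\in\mathcal{RW}(\mathcal{U})$, then there are constants $b>a>0$ such that $\psi_1+\lambda\psi_2\in\mathcal{RW}(\mathcal{U})$ for all $\lambda\in\mathbb{C}$ with either $|\lambda|<a$ or $|\lambda|>b$.
   Context: A unitary system on $H$ is a collection $\mathcal{U}$ of unitary operators on $H$ containing the identity operator. A vector $\psi\in H$ is a complete wandering vector for $\mathcal{U}$ if $\{U\psi: U\in\mathcal{U}\}$ is an orthonormal set whose closed linear span is $H$; $\mathcal{W}(\mathcal{U})$ denotes the set of complete wandering vectors. A Riesz basis of a Hilbert space is the image of an orthonormal basis under a bounded invertible operator. A vector $\psi$ is a complete Riesz vector for $\mathcal{U}$ if $\{U\psi:U\in\mathcal{U}\}$ is a Riesz basis for its closed linear span and this closed linear span is $H$; $\mathcal{RW}(\mathcal{U})$ denotes the set of complete Riesz vectors. *)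

theory Defs
  imports "HOL-Analysis.Analysis"
begin

text \<open>HOL-Analysis only provides real inner product spaces, so we introduce
complex vector spaces, complex inner product spaces and complex Hilbert spaces
as type classes (following the usual axioms; inner product is conjugate-linear
in the first argument and linear in the second, and induces the norm).\<close>

class complex_vector = real_vector +
  fixes scaleC :: "complex \<Rightarrow> 'a \<Rightarrow> 'a" (infixr \<open>*\<^sub>C\<close> 75)
  assumes scaleC_add_right: "a *\<^sub>C (x + y) = a *\<^sub>C x + a *\<^sub>C y"
    and scaleC_add_left: "(a + b) *\<^sub>C x = a *\<^sub>C x + b *\<^sub>C x"
    and scaleC_scaleC: "a *\<^sub>C (b *\<^sub>C x) = (a * b) *\<^sub>C x"
    and scaleC_one: "1 *\<^sub>C x = x"
    and scaleR_scaleC: "scaleR r = scaleC (complex_of_real r)"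

class complex_inner = complex_vector + real_normed_vector +
  fixes cinner :: "'a \<Rightarrow> 'a \<Rightarrow> complex"
  assumes cinner_commute: "cinner x y = cnj (cinner y x)"
    and cinner_add_left: "cinner (x + y) z = cinner x z + cinner y z"
    and cinner_scaleC_left: "cinner (r *\<^sub>C x) y = cnj r * cinner x y"
    and cinner_ge_zero: "0 \<le> Re (cinner x x) \<and> Im (cinner x x) = 0"
    and cinner_eq_zero_iff: "cinner x x = 0 \<longleftrightarrow> x = 0"
    and norm_eq_sqrt_cinner: "norm x = sqrt (Re (cinner x x))"

class chilbert_space = complex_inner + complete_space

definition clinear :: "('a::complex_vector \<Rightarrow> 'b::complex_vector) \<Rightarrow> bool" where
  "clinear T \<longleftrightarrow> (\<forall>x y. T (x + y) = T x + T y) \<and> (\<forall>c x. T (c *\<^sub>C x) = c *\<^sub>C T x)"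

definition bounded_clinear_op :: "('a::complex_inner \<Rightarrow> 'b::complex_inner) \<Rightarrow> bool" where
  "bounded_clinear_op T \<longleftrightarrow> clinear T \<and> (\<exists>K. \<forall>x. norm (T x) \<le> K * norm x)"

definition bounded_invertible :: "('a::complex_inner \<Rightarrow> 'a) \<Rightarrow> bool" where
  "bounded_invertible T \<longleftrightarrow> bounded_clinear_op T \<and>
     (\<exists>S. bounded_clinear_op S \<and> S \<circ> T = id \<and> T \<circ> S = id)"

definition unitary :: "('a::complex_inner \<Rightarrow> 'a) \<Rightarrow> bool" where
  "unitary U \<longleftrightarrow> clinear U \<and> surj U \<and> (\<forall>x y. cinner (U x) (U y) = cinner x y)"

definition cspan :: "'a::complex_vector set \<Rightarrow> 'a set" where
  "cspan S = {y. \<exists>F c. finite F \<and> F \<subseteq> S \<and> y = (\<Sum>x\<in>F. c x *\<^sub>C x)}"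

definition orthonormal_family :: "'i set \<Rightarrow> ('i \<Rightarrow> 'a::complex_inner) \<Rightarrow> bool" where
  "orthonormal_family I e \<longleftrightarrow> (\<forall>i\<in>I. \<forall>j\<in>I. cinner (e i) (e j) = (if i = j then 1 else 0))"

definition onb_family :: "'i set \<Rightarrow> ('i \<Rightarrow> 'a::complex_inner) \<Rightarrow> bool" where
  "onb_family I e \<longleftrightarrow> orthonormal_family I e \<and> closure (cspan (e ` I)) = UNIV"

definition riesz_basis_family :: "'i set \<Rightarrow> ('i \<Rightarrow> 'a::complex_inner) \<Rightarrow> bool" where
  "riesz_basis_family I f \<longleftrightarrow>
     (\<exists>e T. onb_family I e \<and> bounded_invertible T \<and> (\<forall>i\<in>I. f i = T (e i)))"

definition unitary_system :: "('a::complex_inner \<Rightarrow> 'a) set \<Rightarrow> bool" where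
  "unitary_system \<U> \<longleftrightarrow> (\<forall>U\<in>\<U>. unitary U) \<and> id \<in> \<U>"

definition complete_wandering :: "('a::complex_inner \<Rightarrow> 'a) set \<Rightarrow> 'a set" where
  "complete_wandering \<U> = {\<psi>. orthonormal_family \<U> (\<lambda>U. U \<psi>) \<and> closure (cspan ((\<lambda>U. U \<psi>) ` \<U>)) = UNIV}"

definition complete_riesz :: "('a::complex_inner \<Rightarrow> 'a) set \<Rightarrow> 'a set" where
  "complete_riesz \<U> = {\<psi>. closure (cspan ((\<lambda>U. U \<psi>) ` \<U>)) = UNIV \<and> riesz_basis_family \<U> (\<lambda>U. U \<psi>)}"

end

theory Submission
  imports Defs
begin

text \<open>If the orbits \<open>U \<psi>1\<close> and \<open>U \<psi>2\<close> (\<open>U \<in> \<U>\<close>) are Riesz bases, composing their Riesz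
  operators with the unitary map between the underlying orthonormal bases gives a bounded
  invertible \<open>A\<close> with \<open>A (U \<psi>1) = U \<psi>2\<close>; if both orbits are orthonormal, \<open>A\<close> itself is
  unitary. By linearity \<open>U (\<psi>1 + l \<psi>2) = (I + l A) (U \<psi>1)\<close>, so \<open>\<psi>1 + l \<psi>2\<close> is a complete
  Riesz vector whenever \<open>I + l A\<close> is invertible. By the contraction principle this holds if
  \<open>|l| \<parallel>A\<parallel> < 1\<close>, and, writing \<open>I + l A = l A (I + l\<^sup>-\<^sup>1 A\<^sup>-\<^sup>1)\<close>, also if
  \<open>|l| > \<parallel>A\<^sup>-\<^sup>1\<parallel>\<close>. For unitary \<open>A\<close> both norms are \<open>1\<close>, which leaves \<open>|l| \<noteq> 1\<close>.\<close>

declare scaleC_one [simp]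

lemma scaleC_zero_right [simp]: "a *\<^sub>C (0::'a::complex_vector) = 0"
  by (metis add_cancel_right_right scaleC_add_right)

lemma scaleC_of_real: "complex_of_real r *\<^sub>C (x::'a::complex_vector) = r *\<^sub>R x"
  by (simp add: scaleR_scaleC)

lemma scaleC_zero_left [simp]: "0 *\<^sub>C (x::'a::complex_vector) = 0"
  using scaleC_of_real[of 0 x] by simp

lemma scaleC_minus_one: "(-1) *\<^sub>C (x::'a::complex_vector) = - x"
  using scaleC_of_real[of "-1" x] by simp

lemma scaleC_sum_right: "a *\<^sub>C (\<Sum>i\<in>G. f i) = (\<Sum>i\<in>G. a *\<^sub>C (f i::'a::complex_vector))"
  by (induction G rule: infinite_finite_induct) (simp_all add: scaleC_add_right)

lemma scaleR_scaleC_commute: "r *\<^sub>R (a *\<^sub>C x) = a *\<^sub>C (r *\<^sub>R (x::'a::complex_vector))"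
  by (simp add: scaleR_scaleC scaleC_scaleC mult.commute)

lemma clinear_imp_linear: "clinear T \<Longrightarrow> linear T"
  unfolding clinear_def by (intro linearI) (auto simp: scaleR_scaleC)

lemma clinear_sum: "clinear T \<Longrightarrow> T (\<Sum>i\<in>G. f i) = (\<Sum>i\<in>G. T (f i))"
  using linear_sum[OF clinear_imp_linear] by (simp add: o_def)

lemma clinear_scaleC: "clinear T \<Longrightarrow> clinear (\<lambda>x. c *\<^sub>C T x)"
  unfolding clinear_def by (simp add: scaleC_add_right scaleC_scaleC mult.commute)

lemma clinear_inverse:
  assumes "clinear T" "\<And>x. S (T x) = x" "\<And>y. T (S y) = y"
  shows "clinear S"
  unfolding clinear_def
proof (intro conjI allI)
  fix x y
  have "S (x + y) = S (T (S x + S y))"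
    using assms unfolding clinear_def by simp
  then show "S (x + y) = S x + S y" by (simp add: assms(2))
next
  fix c x
  have "S (c *\<^sub>C x) = S (T (c *\<^sub>C S x))"
    using assms unfolding clinear_def by simp
  then show "S (c *\<^sub>C x) = c *\<^sub>C S x" by (simp add: assms(2))
qed

lemma cinner_zero_left [simp]: "cinner 0 x = 0"
  using cinner_add_left[of 0 0 x] by simp

lemma cinner_add_right: "cinner z (x + y) = cinner z x + cinner z y"
  by (metis cinner_add_left cinner_commute complex_cnj_add)

lemma cinner_zero_right [simp]: "cinner x 0 = 0"
  using cinner_add_right[of x 0 0] by simp

lemma cinner_scaleC_right: "cinner z (r *\<^sub>C x) = r * cinner z x"
  by (metis cinner_commute cinner_scaleC_left complex_cnj_cnj complex_cnj_mult)

lemma cinner_sum_left: "cinner (\<Sum>i\<in>G. f i) z = (\<Sum>i\<in>G. cinner (f i) z)"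
  using sum_comp_morphism[of "\<lambda>x. cinner x z" f G] by (simp add: cinner_add_left o_def)

lemma cinner_sum_right: "cinner z (\<Sum>i\<in>G. f i) = (\<Sum>i\<in>G. cinner z (f i))"
  using sum_comp_morphism[of "\<lambda>x. cinner z x" f G] by (simp add: cinner_add_right o_def)

lemma norm_scaleC: "norm (c *\<^sub>C (x::'a::complex_inner)) = cmod c * norm x"
proof -
  have "cinner (c *\<^sub>C x) (c *\<^sub>C x) = complex_of_real ((cmod c)\<^sup>2) * cinner x x"
    by (simp add: cinner_scaleC_left cinner_scaleC_right complex_norm_square mult.commute
        del: of_real_power)
  then have "(norm (c *\<^sub>C x))\<^sup>2 = (cmod c * norm x)\<^sup>2"
    using cinner_ge_zero[of x] by (simp add: norm_eq_sqrt_cinner power_mult_distrib)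
  then show ?thesis by (simp add: power2_eq_iff_nonneg)
qed

lemma bounded_linear_scaleC: "bounded_linear (\<lambda>x::'a::complex_inner. c *\<^sub>C x)"
  by (rule bounded_linear_intro[where K="cmod c"])
     (auto simp: scaleC_add_right scaleR_scaleC_commute norm_scaleC mult.commute)

lemma bounded_clinear_op_bounded_linear:
  assumes "bounded_clinear_op T"
  shows "bounded_linear T"
proof -
  obtain K where "clinear T" "\<forall>x. norm (T x) \<le> K * norm x"
    using assms unfolding bounded_clinear_op_def by blast
  then show ?thesis
    using clinear_imp_linear[OF \<open>clinear T\<close>]
    by (intro bounded_linear_intro[where K=K]) (auto simp: linear_add linear_scale mult.commute)
qed

lemma bounded_clinear_op_continuous_on: "bounded_clinear_op T \<Longrightarrow> continuous_on S T"
  by (rule linear_continuous_on[OF bounded_clinear_op_bounded_linear])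

lemma bounded_clinear_op_nonneg_bound:
  assumes "bounded_clinear_op T"
  obtains K where "0 \<le> K" "\<And>x. norm (T x) \<le> K * norm x"
proof -
  obtain K where K: "\<forall>x. norm (T x) \<le> K * norm x"
    using assms unfolding bounded_clinear_op_def by blast
  have "norm (T x) \<le> max K 0 * norm x" for x
    using K[rule_format, of x] mult_right_mono[of K "max K 0" "norm x"] by auto
  then show thesis by (intro that[of "max K 0"]) auto
qed

lemma bounded_clinear_op_isometry:
  "clinear T \<Longrightarrow> (\<And>x. norm (T x) = norm x) \<Longrightarrow> bounded_clinear_op T"
  unfolding bounded_clinear_op_def by (auto intro!: exI[of _ 1])

lemma bounded_clinear_op_comp:
  assumes "bounded_clinear_op A" "bounded_clinear_op B"
  shows "bounded_clinear_op (A \<circ> B)"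
proof -
  obtain KA where KA: "0 \<le> KA" "\<And>x. norm (A x) \<le> KA * norm x"
    using bounded_clinear_op_nonneg_bound[OF assms(1)] by blast
  obtain KB where KB: "\<And>x. norm (B x) \<le> KB * norm x"
    using assms(2) unfolding bounded_clinear_op_def by blast
  have "norm (A (B x)) \<le> (KA * KB) * norm x" for x
    using order_trans[OF KA(2) mult_left_mono[OF KB KA(1)]] by (simp add: mult.assoc)
  then show ?thesis
    using assms unfolding bounded_clinear_op_def clinear_def by auto
qed

lemma bounded_invertibleI:
  assumes "bounded_clinear_op T" "bounded_clinear_op S" "\<And>x. S (T x) = x" "\<And>y. T (S y) = y"
  shows "bounded_invertible T"
  unfolding bounded_invertible_def using assms by (auto simp: fun_eq_iff)

lemma bounded_invertibleE:
  assumes "bounded_invertible T"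
  obtains S where "bounded_clinear_op T" "bounded_clinear_op S"
    "\<And>x. S (T x) = x" "\<And>y. T (S y) = y"
  using assms unfolding bounded_invertible_def by (metis comp_apply id_apply)

lemma bounded_invertible_id: "bounded_invertible (\<lambda>x::'a::complex_inner. x)"
  by (rule bounded_invertibleI[of _ "\<lambda>x. x"]) (simp_all add: bounded_clinear_op_isometry clinear_def)

lemma bounded_invertible_comp:
  assumes "bounded_invertible A" "bounded_invertible B"
  shows "bounded_invertible (A \<circ> B)"
proof -
  obtain SA where SA: "bounded_clinear_op A" "bounded_clinear_op SA"
    "\<And>x. SA (A x) = x" "\<And>y. A (SA y) = y"
    using bounded_invertibleE[OF assms(1)] by blast
  obtain SB where SB: "bounded_clinear_op B" "bounded_clinear_op SB"
    "\<And>x. SB (B x) = x" "\<And>y. B (SB y) = y"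
    using bounded_invertibleE[OF assms(2)] by blast
  show ?thesis
    by (rule bounded_invertibleI[of _ "SB \<circ> SA"]) (simp_all add: SA SB bounded_clinear_op_comp)
qed

lemma bounded_clinear_op_scaleC:
  assumes "bounded_clinear_op T"
  shows "bounded_clinear_op (\<lambda>x. c *\<^sub>C T x)"
proof -
  obtain K where K: "0 \<le> K" "\<And>x. norm (T x) \<le> K * norm x"
    using bounded_clinear_op_nonneg_bound[OF assms] by blast
  have "norm (c *\<^sub>C T x) \<le> (cmod c * K) * norm x" for x
    using mult_left_mono[OF K(2) norm_ge_zero[of c]] by (simp add: norm_scaleC mult.assoc)
  then show ?thesis
    using assms clinear_scaleC unfolding bounded_clinear_op_def by blast
qed

lemma bounded_invertible_scaleC:
  assumes "bounded_invertible A" "c \<noteq> 0"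
  shows "bounded_invertible (\<lambda>x. c *\<^sub>C A x)"
proof -
  obtain S where S: "bounded_clinear_op A" "bounded_clinear_op S"
    "\<And>x. S (A x) = x" "\<And>y. A (S y) = y"
    using bounded_invertibleE[OF assms(1)] by blast
  have "clinear A" "clinear S"
    using S(1,2) unfolding bounded_clinear_op_def by auto
  then show ?thesis
    using assms(2)
    by (intro bounded_invertibleI[of _ "\<lambda>x. inverse c *\<^sub>C S x"] bounded_clinear_op_scaleC S)
       (simp_all add: clinear_def scaleC_scaleC S)
qed

lemma bounded_invertible_bounds:
  assumes "bounded_invertible A"
  obtains KA KS where "0 \<le> KA" "0 \<le> KS"
    "\<And>x. norm (A x) \<le> KA * norm x" "\<And>x. norm x \<le> KS * norm (A x)"
proof -
  obtain S where S: "bounded_clinear_op A" "bounded_clinear_op S"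
    "\<And>x. S (A x) = x" "\<And>y. A (S y) = y"
    using bounded_invertibleE[OF assms] by blast
  obtain KA where KA: "0 \<le> KA" "\<And>x. norm (A x) \<le> KA * norm x"
    using bounded_clinear_op_nonneg_bound[OF S(1)] by blast
  obtain KS where KS: "0 \<le> KS" "\<And>y. norm (S y) \<le> KS * norm y"
    using bounded_clinear_op_nonneg_bound[OF S(2)] by blast
  have "norm x \<le> KS * norm (A x)" for x
    using KS(2)[of "A x"] by (simp only: S(3))
  then show thesis by (rule that[OF KA(1) KS(1) KA(2)])
qed

section \<open>Invertibility of \<open>I + l A\<close>\<close>

lemma bounded_invertible_id_plus_contraction:
  fixes B :: "'a::chilbert_space \<Rightarrow> 'a"
  assumes "clinear B" and B_bound: "\<And>x. norm (B x) \<le> k * norm x" and "k < 1"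
  shows "bounded_invertible (\<lambda>x. x + B x)"
proof -
  define k' where "k' = max k 0"
  have k': "0 \<le> k'" "k' < 1" "\<And>x. norm (B x) \<le> k' * norm x"
    unfolding k'_def using assms(3)
    by (auto intro: order_trans[OF B_bound mult_right_mono[OF max.cobounded1 norm_ge_zero]])
  have linear_B: "linear B" by (rule clinear_imp_linear[OF assms(1)])
  \<comment> \<open>The solution of \<open>x + B x = y\<close> is the fixed point of the contraction \<open>x \<mapsto> y - B x\<close>.\<close>
  have unique_solution: "\<exists>!x. y - B x = x" for y
  proof (rule banach_fix_type[OF k'(1,2)])
    show "\<forall>x z. dist (y - B x) (y - B z) \<le> k' * dist x z"
    proof (intro allI)
      fix x z
      have "dist (y - B x) (y - B z) = norm (B (z - x))"
        by (simp add: dist_norm linear_diff[OF linear_B])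
      also have "\<dots> \<le> k' * norm (z - x)" by (rule k'(3))
      finally show "dist (y - B x) (y - B z) \<le> k' * dist x z"
        by (simp add: dist_norm norm_minus_commute)
    qed
  qed
  define S where "S y = (THE x. y - B x = x)" for y
  have S_solves: "S y + B (S y) = y" for y
    using theI'[OF unique_solution[of y]] unfolding S_def by (metis diff_add_cancel)
  have S_left_inverse: "S (x + B x) = x" for x
    unfolding S_def by (rule the1_equality[OF unique_solution]) simp
  have clinear_T: "clinear (\<lambda>x. x + B x)"
    using assms(1) unfolding clinear_def by (auto simp: scaleC_add_right algebra_simps)
  have S_bound: "norm (S y) \<le> (1 / (1 - k')) * norm y" for y
  proof -
    have "norm (S y) \<le> norm y + norm (B (S y))"
      using S_solves[of y] by (metis add_diff_cancel_right' norm_triangle_ineq4)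
    also have "\<dots> \<le> norm y + k' * norm (S y)" using k'(3) by simp
    finally show ?thesis using k'(2) by (simp add: field_simps)
  qed
  have T_bound: "norm (x + B x) \<le> (1 + k') * norm x" for x
    using norm_triangle_ineq[of x "B x"] k'(3)[of x] by (simp add: algebra_simps)
  show ?thesis
  proof (rule bounded_invertibleI[of _ S])
    show "bounded_clinear_op (\<lambda>x. x + B x)"
      unfolding bounded_clinear_op_def using clinear_T T_bound by blast
    show "bounded_clinear_op S"
      unfolding bounded_clinear_op_def using clinear_inverse[OF clinear_T] S_bound
      by (metis S_left_inverse S_solves)
  qed (simp_all add: S_left_inverse S_solves)
qed

lemma bounded_invertible_id_plus_scaleC:
  fixes A :: "'a::chilbert_space \<Rightarrow> 'a"
  assumes "bounded_invertible A"
    and A_bound: "\<And>x. norm (A x) \<le> KA * norm x"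
    and A_lower_bound: "\<And>x. norm x \<le> KS * norm (A x)"
    and "cmod l * KA < 1 \<or> KS < cmod l"
  shows "bounded_invertible (\<lambda>x. x + l *\<^sub>C A x)"
proof -
  obtain S where S: "bounded_clinear_op A" "bounded_clinear_op S"
    "\<And>x. S (A x) = x" "\<And>y. A (S y) = y"
    using bounded_invertibleE[OF assms(1)] by blast
  have clinear_A: "clinear A" and clinear_S: "clinear S"
    using S(1,2) unfolding bounded_clinear_op_def by auto
  consider "l = 0" | "cmod l * KA < 1" | "l \<noteq> 0" "KS < cmod l" using assms(4) by blast
  then show ?thesis
  proof cases
    case 1
    then show ?thesis using bounded_invertible_id by simp
  next
    case 2
    show ?thesis
    proof (rule bounded_invertible_id_plus_contraction[OF clinear_scaleC[OF clinear_A] _ 2])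
      show "norm (l *\<^sub>C A x) \<le> cmod l * KA * norm x" for x
        using mult_left_mono[OF A_bound norm_ge_zero[of l]] by (simp add: norm_scaleC mult.assoc)
    qed
  next
    case 3
    have "bounded_invertible (\<lambda>y. y + inverse l *\<^sub>C S y)"
    proof (rule bounded_invertible_id_plus_contraction[OF clinear_scaleC[OF clinear_S]])
      show "norm (inverse l *\<^sub>C S y) \<le> KS / cmod l * norm y" for y
      proof -
        have "norm (inverse l *\<^sub>C S y) = norm (S y) / cmod l"
          by (simp add: norm_scaleC norm_inverse divide_inverse mult.commute)
        also have "\<dots> \<le> KS * norm y / cmod l"
          using A_lower_bound[of "S y"] by (simp add: S(4) divide_right_mono)
        finally show ?thesis by simp
      qed
      show "KS / cmod l < 1" using 3 by simp
    qed
    moreover have "bounded_invertible (\<lambda>x. l *\<^sub>C A x)"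
      using bounded_invertible_scaleC[OF assms(1) 3(1)] .
    moreover have "(\<lambda>x. x + l *\<^sub>C A x) = (\<lambda>x. l *\<^sub>C A x) \<circ> (\<lambda>y. y + inverse l *\<^sub>C S y)"
      using clinear_A 3(1) unfolding clinear_def
      by (auto simp: fun_eq_iff scaleC_add_right scaleC_scaleC S(4) add.commute)
    ultimately show ?thesis using bounded_invertible_comp by metis
  qed
qed

section \<open>Unitary maps between orthonormal bases\<close>

lemma continuous_agree_on_dense:
  fixes f g :: "'a::topological_space \<Rightarrow> 'b::t2_space"
  assumes "continuous_on UNIV f" "continuous_on UNIV g" "closure D = UNIV"
    and "\<And>x. x \<in> D \<Longrightarrow> f x = g x"
  shows "f x = g x"
proof -
  have "closure D \<subseteq> {x. f x = g x}"
    using assms(4) by (intro closure_minimal) (auto intro: closed_Collect_eq[OF assms(1,2)])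
  then show ?thesis using assms(3) by auto
qed

lemma isometry_extension_from_dense:
  fixes W :: "'a::complex_inner \<Rightarrow> 'b::chilbert_space"
  assumes dense: "closure D = UNIV"
    and add: "\<And>x y. x \<in> D \<Longrightarrow> y \<in> D \<Longrightarrow> x + y \<in> D \<and> W (x + y) = W x + W y"
    and scale: "\<And>c x. x \<in> D \<Longrightarrow> c *\<^sub>C x \<in> D \<and> W (c *\<^sub>C x) = c *\<^sub>C W x"
    and isometric: "\<And>x. x \<in> D \<Longrightarrow> norm (W x) = norm x"
  obtains g where "clinear g" "\<And>x. norm (g x) = norm x" "\<And>x. x \<in> D \<Longrightarrow> g x = W x"
proof -
  have diff: "x - y \<in> D \<and> W (x - y) = W x - W y" if "x \<in> D" "y \<in> D" for x y
    using add[OF that(1) scale[OF that(2), THEN conjunct1], of "-1"] scale[OF that(2), of "-1"]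
    by (simp add: scaleC_minus_one)
  have "uniformly_continuous_on D W"
    unfolding uniformly_continuous_on_def
  proof (intro allI impI)
    fix \<epsilon> :: real
    assume "\<epsilon> > 0"
    then show "\<exists>\<delta>>0. \<forall>x\<in>D. \<forall>x'\<in>D. dist x' x < \<delta> \<longrightarrow> dist (W x') (W x) < \<epsilon>"
      using diff isometric by (intro exI[of _ \<epsilon>]) (metis dist_norm)
  qed
  then obtain g where "uniformly_continuous_on (closure D) g" and g_ext: "\<And>x. x \<in> D \<Longrightarrow> W x = g x"
    using uniformly_continuous_on_extension_on_closure by metis
  then have cont_g: "continuous_on UNIV g"
    using dense uniformly_continuous_imp_continuous by fastforce
  have cont_scaleC: "continuous_on UNIV (\<lambda>x::'c::complex_inner. c *\<^sub>C x)" for c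
    by (rule linear_continuous_on[OF bounded_linear_scaleC])
  have g_isometric: "norm (g x) = norm x" for x
    by (rule continuous_agree_on_dense[OF continuous_on_norm[OF cont_g]
          continuous_on_norm[OF continuous_on_id] dense])
       (metis isometric g_ext)
  \<comment> \<open>Additivity is extended from \<open>D\<close> one argument at a time.\<close>
  have add_D: "g (x + y) = g x + g y" if "y \<in> D" for x y
    by (rule continuous_agree_on_dense[OF continuous_on_compose2[OF cont_g, of UNIV "\<lambda>x. x + y"]
          _ dense])
       (auto intro!: continuous_intros cont_g simp: add g_ext[symmetric] that)
  have "g (x + y) = g x + g y" for x y
    by (rule continuous_agree_on_dense[OF continuous_on_compose2[OF cont_g, of UNIV "\<lambda>y. x + y"]
          _ dense])
       (auto intro!: continuous_intros cont_g simp: add_D)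
  moreover have "g (c *\<^sub>C x) = c *\<^sub>C g x" for c x
    by (rule continuous_agree_on_dense[OF continuous_on_compose2[OF cont_g cont_scaleC]
          continuous_on_compose2[OF cont_scaleC cont_g] dense])
       (auto simp: scale g_ext[symmetric])
  ultimately have "clinear g" by (simp add: clinear_def)
  with g_isometric g_ext show thesis by (intro that) auto
qed

text \<open>Unlike \<open>cspan (e ` I)\<close>, this keeps the coefficients attached to indices.\<close>
definition family_span :: "'i set \<Rightarrow> ('i \<Rightarrow> 'a::complex_vector) \<Rightarrow> 'a set" where
  "family_span I e = {\<Sum>i\<in>G. d i *\<^sub>C e i | G d. finite G \<and> G \<subseteq> I}"

lemma family_spanI: "finite G \<Longrightarrow> G \<subseteq> I \<Longrightarrow> (\<Sum>i\<in>G. d i *\<^sub>C e i) \<in> family_span I e"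
  unfolding family_span_def by blast

lemma family_span_common_support:
  assumes "x \<in> family_span I e" "y \<in> family_span I e"
  obtains K c d where "finite K" "K \<subseteq> I"
    "x = (\<Sum>i\<in>K. c i *\<^sub>C e i)" "y = (\<Sum>i\<in>K. d i *\<^sub>C e i)"
proof -
  obtain G c where G: "finite G" "G \<subseteq> I" "x = (\<Sum>i\<in>G. c i *\<^sub>C e i)"
    using assms(1) unfolding family_span_def by blast
  obtain H d where H: "finite H" "H \<subseteq> I" "y = (\<Sum>i\<in>H. d i *\<^sub>C e i)"
    using assms(2) unfolding family_span_def by blast
  have "(\<Sum>i\<in>G. c i *\<^sub>C e i) = (\<Sum>i\<in>G \<union> H. (if i \<in> G then c i else 0) *\<^sub>C e i)"
    "(\<Sum>i\<in>H. d i *\<^sub>C e i) = (\<Sum>i\<in>G \<union> H. (if i \<in> H then d i else 0) *\<^sub>C e i)"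
    using G(1) H(1) by (intro sum.mono_neutral_cong_left; auto)+
  then show thesis
    using G H by (intro that) auto
qed

lemma cspan_subset_family_span: "cspan (e ` I) \<subseteq> family_span I e"
proof
  fix y
  assume "y \<in> cspan (e ` I)"
  then obtain F c where F: "finite F" "F \<subseteq> e ` I" "y = (\<Sum>x\<in>F. c x *\<^sub>C x)"
    unfolding cspan_def by blast
  then obtain G where G: "G \<subseteq> I" "inj_on e G" "F = e ` G"
    by (auto simp: subset_image_inj)
  then have "finite G" using F(1) finite_image_iff by metis
  moreover have "y = (\<Sum>i\<in>G. c (e i) *\<^sub>C e i)" using F G by (simp add: sum.reindex)
  ultimately show "y \<in> family_span I e" using G family_spanI by metis
qed

lemma family_span_dense:
  "closure (cspan (e ` I)) = UNIV \<Longrightarrow> closure (family_span I e) = UNIV"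
  using closure_mono[OF cspan_subset_family_span[of e I]] by auto

lemma orthonormal_family_cinner_sum:
  assumes "orthonormal_family I e" "finite G" "G \<subseteq> I" "j \<in> I"
  shows "cinner (e j) (\<Sum>i\<in>G. d i *\<^sub>C e i) = (if j \<in> G then d j else 0)"
proof -
  have "cinner (e j) (\<Sum>i\<in>G. d i *\<^sub>C e i) = (\<Sum>i\<in>G. d i * cinner (e j) (e i))"
    by (simp add: cinner_sum_right cinner_scaleC_right)
  also have "\<dots> = (\<Sum>i\<in>G. if j = i then d i else 0)"
    using assms unfolding orthonormal_family_def by (intro sum.cong) auto
  finally show ?thesis using assms(2) by simp
qed

lemma orthonormal_family_norm_sum:
  assumes "orthonormal_family I e" "finite G" "G \<subseteq> I"
  shows "norm (\<Sum>i\<in>G. d i *\<^sub>C e i) = sqrt (\<Sum>i\<in>G. (cmod (d i))\<^sup>2)"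
proof -
  have "cinner (\<Sum>i\<in>G. d i *\<^sub>C e i) (\<Sum>i\<in>G. d i *\<^sub>C e i) = (\<Sum>i\<in>G. cnj (d i) * d i)"
    using assms orthonormal_family_cinner_sum[OF assms]
    by (auto simp: cinner_sum_left cinner_scaleC_left intro!: sum.cong)
  also have "\<dots> = complex_of_real (\<Sum>i\<in>G. (cmod (d i))\<^sup>2)"
    by (simp add: complex_norm_square mult.commute del: of_real_power)
  finally show ?thesis
    by (simp add: norm_eq_sqrt_cinner)
qed

text \<open>Only meaningful on \<open>family_span I e1\<close>, where the set of nonzero coefficients is
  finite.\<close>
definition basis_transfer ::
    "'i set \<Rightarrow> ('i \<Rightarrow> 'a::complex_inner) \<Rightarrow> ('i \<Rightarrow> 'b::complex_vector) \<Rightarrow> 'a \<Rightarrow> 'b" where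
  "basis_transfer I e1 e2 x = (\<Sum>i\<in>{i\<in>I. cinner (e1 i) x \<noteq> 0}. cinner (e1 i) x *\<^sub>C e2 i)"

lemma basis_transfer_sum:
  assumes "orthonormal_family I e1" "finite G" "G \<subseteq> I"
  shows "basis_transfer I e1 e2 (\<Sum>i\<in>G. d i *\<^sub>C e1 i) = (\<Sum>i\<in>G. d i *\<^sub>C e2 i)"
proof -
  have "{i\<in>I. cinner (e1 i) (\<Sum>i\<in>G. d i *\<^sub>C e1 i) \<noteq> 0} = {i\<in>G. d i \<noteq> 0}"
    using orthonormal_family_cinner_sum[OF assms] assms(3) by (auto split: if_splits)
  then have "basis_transfer I e1 e2 (\<Sum>i\<in>G. d i *\<^sub>C e1 i)
      = (\<Sum>i\<in>{i\<in>G. d i \<noteq> 0}. d i *\<^sub>C e2 i)"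
    unfolding basis_transfer_def using orthonormal_family_cinner_sum[OF assms] assms(3)
    by (intro sum.cong) auto
  also have "\<dots> = (\<Sum>i\<in>G. d i *\<^sub>C e2 i)"
    using assms(2) by (intro sum.mono_neutral_left) auto
  finally show ?thesis .
qed

lemma orthonormal_family_isometry:
  fixes e1 :: "'i \<Rightarrow> 'a::complex_inner" and e2 :: "'i \<Rightarrow> 'b::chilbert_space"
  assumes o1: "orthonormal_family I e1" and o2: "orthonormal_family I e2"
    and dense: "closure (cspan (e1 ` I)) = UNIV"
  obtains g where "clinear g" "\<And>x. norm (g x) = norm x"
    "\<And>G d. finite G \<Longrightarrow> G \<subseteq> I \<Longrightarrow> g (\<Sum>i\<in>G. d i *\<^sub>C e1 i) = (\<Sum>i\<in>G. d i *\<^sub>C e2 i)"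
proof -
  let ?D = "family_span I e1" and ?W = "basis_transfer I e1 e2"
  have dense_D: "closure ?D = UNIV"
    using dense by (rule family_span_dense)
  have add_D: "x + y \<in> ?D \<and> ?W (x + y) = ?W x + ?W y" if xy: "x \<in> ?D" "y \<in> ?D" for x y
  proof -
    obtain K c d where K: "finite K" "K \<subseteq> I"
      "x = (\<Sum>i\<in>K. c i *\<^sub>C e1 i)" "y = (\<Sum>i\<in>K. d i *\<^sub>C e1 i)"
      using family_span_common_support[OF xy] by metis
    have sum: "x + y = (\<Sum>i\<in>K. (c i + d i) *\<^sub>C e1 i)"
      by (simp only: K(3,4) scaleC_add_left sum.distrib)
    have "x + y \<in> ?D"
      unfolding sum by (rule family_spanI[OF K(1,2)])
    moreover have "?W (x + y) = ?W x + ?W y"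
      unfolding sum basis_transfer_sum[OF o1 K(1,2)]
      unfolding K(3,4) basis_transfer_sum[OF o1 K(1,2)]
      by (simp only: scaleC_add_left sum.distrib)
    ultimately show ?thesis ..
  qed
  have scale_D: "c *\<^sub>C x \<in> ?D \<and> ?W (c *\<^sub>C x) = c *\<^sub>C ?W x" if x: "x \<in> ?D" for c x
  proof -
    obtain K d where K: "finite K" "K \<subseteq> I" "x = (\<Sum>i\<in>K. d i *\<^sub>C e1 i)"
      using x unfolding family_span_def by blast
    have scaled: "c *\<^sub>C x = (\<Sum>i\<in>K. (c * d i) *\<^sub>C e1 i)"
      by (simp only: K(3) scaleC_sum_right scaleC_scaleC)
    have "c *\<^sub>C x \<in> ?D"
      unfolding scaled by (rule family_spanI[OF K(1,2)])
    moreover have "?W (c *\<^sub>C x) = c *\<^sub>C ?W x"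
      unfolding scaled basis_transfer_sum[OF o1 K(1,2)]
      unfolding K(3) basis_transfer_sum[OF o1 K(1,2)]
      by (simp only: scaleC_sum_right scaleC_scaleC)
    ultimately show ?thesis ..
  qed
  have isometric_D: "norm (?W x) = norm x" if x: "x \<in> ?D" for x
  proof -
    obtain K d where K: "finite K" "K \<subseteq> I" "x = (\<Sum>i\<in>K. d i *\<^sub>C e1 i)"
      using x unfolding family_span_def by blast
    show ?thesis
      unfolding K(3) basis_transfer_sum[OF o1 K(1,2)]
      by (simp only: orthonormal_family_norm_sum[OF o1 K(1,2)]
          orthonormal_family_norm_sum[OF o2 K(1,2)])
  qed
  obtain g where g: "clinear g" "\<And>x. norm (g x) = norm x"
    and g_ext: "\<And>x. x \<in> ?D \<Longrightarrow> g x = ?W x"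
    using isometry_extension_from_dense[OF dense_D add_D scale_D isometric_D] by blast
  have "g (\<Sum>i\<in>G. d i *\<^sub>C e1 i) = (\<Sum>i\<in>G. d i *\<^sub>C e2 i)" if "finite G" "G \<subseteq> I" for G d
    using g_ext[OF family_spanI[OF that]] basis_transfer_sum[OF o1 that] by simp
  then show thesis by (rule that[OF g])
qed

lemma onb_family_unitary_map:
  fixes e1 e2 :: "'i \<Rightarrow> 'a::chilbert_space"
  assumes "onb_family I e1" "onb_family I e2"
  obtains W where "bounded_invertible W" "\<And>x. norm (W x) = norm x"
    "\<And>i. i \<in> I \<Longrightarrow> W (e1 i) = e2 i"
proof -
  have o1: "orthonormal_family I e1" and dense1: "closure (cspan (e1 ` I)) = UNIV"
    and o2: "orthonormal_family I e2" and dense2: "closure (cspan (e2 ` I)) = UNIV"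
    using assms unfolding onb_family_def by auto
  obtain g where g: "clinear g" "\<And>x. norm (g x) = norm x"
    "\<And>G d. finite G \<Longrightarrow> G \<subseteq> I \<Longrightarrow> g (\<Sum>i\<in>G. d i *\<^sub>C e1 i) = (\<Sum>i\<in>G. d i *\<^sub>C e2 i)"
    using orthonormal_family_isometry[OF o1 o2 dense1] by blast
  obtain g' where g': "clinear g'" "\<And>x. norm (g' x) = norm x"
    "\<And>G d. finite G \<Longrightarrow> G \<subseteq> I \<Longrightarrow> g' (\<Sum>i\<in>G. d i *\<^sub>C e2 i) = (\<Sum>i\<in>G. d i *\<^sub>C e1 i)"
    using orthonormal_family_isometry[OF o2 o1 dense2] by blast
  have bounded: "bounded_clinear_op g" "bounded_clinear_op g'"
    using g g' by (simp_all add: bounded_clinear_op_isometry)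
  have cont: "continuous_on UNIV (\<lambda>x. g' (g x))" "continuous_on UNIV (\<lambda>x. g (g' x))"
    using bounded bounded_clinear_op_comp[unfolded comp_def] bounded_clinear_op_continuous_on
    by blast+
  have "g' (g x) = x" for x
    by (rule continuous_agree_on_dense[OF cont(1) continuous_on_id family_span_dense[OF dense1]])
       (auto simp: family_span_def g g')
  moreover have "g (g' x) = x" for x
    by (rule continuous_agree_on_dense[OF cont(2) continuous_on_id family_span_dense[OF dense2]])
       (auto simp: family_span_def g g')
  moreover have "g (e1 i) = e2 i" if "i \<in> I" for i
    using g(3)[of "{i}" "\<lambda>_. 1"] that by simp
  ultimately show thesis
    using bounded g(2) that[OF bounded_invertibleI[of g g']] by auto
qed

section \<open>Riesz bases\<close>

lemma cspan_image_subset: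
  assumes "clinear T" "inj T"
  shows "T ` cspan S \<subseteq> cspan (T ` S)"
proof
  fix z
  assume "z \<in> T ` cspan S"
  then obtain F c where F: "finite F" "F \<subseteq> S" "z = T (\<Sum>x\<in>F. c x *\<^sub>C x)"
    unfolding cspan_def by auto
  have "z = (\<Sum>x\<in>F. T (c x *\<^sub>C x))" unfolding F(3) by (rule clinear_sum[OF assms(1)])
  also have "\<dots> = (\<Sum>x\<in>F. c x *\<^sub>C T x)" using assms(1) unfolding clinear_def by simp
  also have "\<dots> = (\<Sum>y\<in>T ` F. c (inv T y) *\<^sub>C y)"
    by (subst sum.reindex[OF inj_on_subset[OF assms(2) subset_UNIV]])
       (simp add: inv_f_f[OF assms(2)])
  finally have "z = (\<Sum>y\<in>T ` F. c (inv T y) *\<^sub>C y)" .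
  moreover have "finite (T ` F)" "T ` F \<subseteq> T ` S" using F by auto
  ultimately show "z \<in> cspan (T ` S)" unfolding cspan_def
    by (intro CollectI exI[of _ "T ` F"] exI[of _ "\<lambda>y. c (inv T y)"]) simp
qed

lemma onb_family_imp_riesz_basis_family: "onb_family I e \<Longrightarrow> riesz_basis_family I e"
  unfolding riesz_basis_family_def
  by (intro exI[of _ e] exI[of _ "\<lambda>x. x"] conjI bounded_invertible_id) simp_all

lemma riesz_basis_family_image:
  assumes "riesz_basis_family I f" "bounded_invertible T"
  shows "riesz_basis_family I (\<lambda>i. T (f i))"
proof -
  obtain e T1 where "onb_family I e" "bounded_invertible T1" "\<forall>i\<in>I. f i = T1 (e i)"
    using assms(1) unfolding riesz_basis_family_def by blast
  then show ?thesis
    unfolding riesz_basis_family_def using bounded_invertible_comp[OF assms(2)]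
    by (intro exI[of _ e] exI[of _ "T \<circ> T1"]) auto
qed

lemma riesz_basis_family_dense_span:
  assumes "riesz_basis_family I f"
  shows "closure (cspan (f ` I)) = UNIV"
proof -
  obtain e T where e: "onb_family I e" and T: "bounded_invertible T" "\<forall>i\<in>I. f i = T (e i)"
    using assms unfolding riesz_basis_family_def by blast
  obtain S where S: "bounded_clinear_op T" "bounded_clinear_op S"
    "\<And>x. S (T x) = x" "\<And>y. T (S y) = y"
    using bounded_invertibleE[OF T(1)] by blast
  have "surj T" using S(4) by (rule surjI)
  then have "UNIV = T ` closure (cspan (e ` I))"
    using e unfolding onb_family_def by simp
  also have "\<dots> \<subseteq> closure (T ` cspan (e ` I))"
    by (rule closure_bounded_linear_image_subset[OF bounded_clinear_op_bounded_linear[OF S(1)]])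
  also have "\<dots> \<subseteq> closure (cspan (f ` I))"
  proof (rule closure_mono)
    have "inj T" by (rule injI) (metis S(3))
    moreover have "clinear T" using S(1) unfolding bounded_clinear_op_def by blast
    ultimately have "T ` cspan (e ` I) \<subseteq> cspan (T ` e ` I)"
      by (intro cspan_image_subset)
    also have "T ` e ` I = f ` I" using T(2) by (auto simp: image_image)
    finally show "T ` cspan (e ` I) \<subseteq> cspan (f ` I)" .
  qed
  finally show ?thesis by auto
qed

lemma riesz_basis_family_transfer:
  fixes f g :: "'i \<Rightarrow> 'a::chilbert_space"
  assumes "riesz_basis_family I f" "riesz_basis_family I g"
  obtains A where "bounded_invertible A" "\<And>i. i \<in> I \<Longrightarrow> A (f i) = g i"
proof -
  obtain e1 T1 where e1: "onb_family I e1" "bounded_invertible T1" "\<forall>i\<in>I. f i = T1 (e1 i)"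
    using assms(1) unfolding riesz_basis_family_def by blast
  obtain e2 T2 where e2: "onb_family I e2" "bounded_invertible T2" "\<forall>i\<in>I. g i = T2 (e2 i)"
    using assms(2) unfolding riesz_basis_family_def by blast
  obtain S1 where S1: "bounded_clinear_op T1" "bounded_clinear_op S1"
    "\<And>x. S1 (T1 x) = x" "\<And>y. T1 (S1 y) = y"
    using bounded_invertibleE[OF e1(2)] by blast
  obtain W where W: "bounded_invertible W" "\<And>x. norm (W x) = norm x"
    "\<And>i. i \<in> I \<Longrightarrow> W (e1 i) = e2 i"
    using onb_family_unitary_map[OF e1(1) e2(1)] by blast
  have "bounded_invertible S1"
    using S1 by (intro bounded_invertibleI[of _ T1])
  then have "bounded_invertible (T2 \<circ> (W \<circ> S1))"
    using e2(2) W(1) by (intro bounded_invertible_comp)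
  moreover have "(T2 \<circ> (W \<circ> S1)) (f i) = g i" if "i \<in> I" for i
    using that e1(3) e2(3) S1(3) W(3) by simp
  ultimately show thesis by (rule that)
qed

lemma complete_riesz_iff: "\<psi> \<in> complete_riesz \<U> \<longleftrightarrow> riesz_basis_family \<U> (\<lambda>U. U \<psi>)"
  unfolding complete_riesz_def mem_Collect_eq using riesz_basis_family_dense_span by blast

lemma complete_wandering_imp_onb_family:
  "\<psi> \<in> complete_wandering \<U> \<Longrightarrow> onb_family \<U> (\<lambda>U. U \<psi>)"
  unfolding complete_wandering_def onb_family_def by simp

lemma complete_riesz_add_scaleC_intertwining:
  assumes "\<And>U. U \<in> \<U> \<Longrightarrow> clinear U" "\<psi>1 \<in> complete_riesz \<U>"
    and "\<And>U. U \<in> \<U> \<Longrightarrow> A (U \<psi>1) = U \<psi>2"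
    and "bounded_invertible (\<lambda>x. x + l *\<^sub>C A x)"
  shows "\<psi>1 + l *\<^sub>C \<psi>2 \<in> complete_riesz \<U>"
proof -
  have "riesz_basis_family \<U> (\<lambda>U. U \<psi>1 + l *\<^sub>C A (U \<psi>1))"
    using riesz_basis_family_image[OF assms(2)[unfolded complete_riesz_iff] assms(4)] .
  moreover have "U \<psi>1 + l *\<^sub>C A (U \<psi>1) = U (\<psi>1 + l *\<^sub>C \<psi>2)" if "U \<in> \<U>" for U
    using assms(1,3)[OF that] by (simp add: clinear_def)
  ultimately show ?thesis
    unfolding complete_riesz_iff riesz_basis_family_def by simp
qed

lemma complete_wandering_add_scaleC:
  fixes \<U> :: "('a::chilbert_space \<Rightarrow> 'a) set"
  assumes "\<And>U. U \<in> \<U> \<Longrightarrow> clinear U"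
    and "\<psi>1 \<in> complete_wandering \<U>" "\<psi>2 \<in> complete_wandering \<U>" "cmod l \<noteq> 1"
  shows "\<psi>1 + l *\<^sub>C \<psi>2 \<in> complete_riesz \<U>"
proof -
  have onb: "onb_family \<U> (\<lambda>U. U \<psi>1)" "onb_family \<U> (\<lambda>U. U \<psi>2)"
    using assms(2,3) by (simp_all add: complete_wandering_imp_onb_family)
  obtain W where W: "bounded_invertible W" "\<And>x. norm (W x) = norm x"
    "\<And>U. U \<in> \<U> \<Longrightarrow> W (U \<psi>1) = U \<psi>2"
    using onb_family_unitary_map[OF onb] by blast
  have riesz: "\<psi>1 \<in> complete_riesz \<U>"
    using onb(1) by (simp add: complete_riesz_iff onb_family_imp_riesz_basis_family)
  have "bounded_invertible (\<lambda>x. x + l *\<^sub>C W x)"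
    using assms(4) by (intro bounded_invertible_id_plus_scaleC[OF W(1), of 1 1]) (auto simp: W(2))
  with assms(1) riesz W(3) show ?thesis
    by (rule complete_riesz_add_scaleC_intertwining)
qed

lemma complete_riesz_add_scaleC:
  fixes \<U> :: "('a::chilbert_space \<Rightarrow> 'a) set"
  assumes "\<And>U. U \<in> \<U> \<Longrightarrow> clinear U"
    and "\<psi>1 \<in> complete_riesz \<U>" "\<psi>2 \<in> complete_riesz \<U>"
  obtains a b where "0 < a" "a < b"
    "\<And>l. cmod l < a \<or> b < cmod l \<Longrightarrow> \<psi>1 + l *\<^sub>C \<psi>2 \<in> complete_riesz \<U>"
proof -
  obtain A where A: "bounded_invertible A" "\<And>U. U \<in> \<U> \<Longrightarrow> A (U \<psi>1) = U \<psi>2"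
    using riesz_basis_family_transfer assms(2,3) unfolding complete_riesz_iff by blast
  obtain KA KS where K: "0 \<le> KA" "0 \<le> KS"
    "\<And>x. norm (A x) \<le> KA * norm x" "\<And>x. norm x \<le> KS * norm (A x)"
    using bounded_invertible_bounds[OF A(1)] by blast
  have bounds: "0 < 1 / (KA + 1)" "1 / (KA + 1) < KS + 2"
    using K(1,2) by (simp_all add: divide_le_eq order.strict_trans1[of _ 1])
  have "\<psi>1 + l *\<^sub>C \<psi>2 \<in> complete_riesz \<U>" if "cmod l < 1 / (KA + 1) \<or> KS + 2 < cmod l" for l
  proof -
    have "cmod l * KA < 1 \<or> KS < cmod l"
    proof (cases "cmod l < 1 / (KA + 1)")
      case True
      then have "cmod l * KA + cmod l < 1"
        using K(1) by (simp add: pos_less_divide_eq distrib_left)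
      then show ?thesis using norm_ge_zero[of l] by linarith
    qed (use that in auto)
    then have "bounded_invertible (\<lambda>x. x + l *\<^sub>C A x)"
      by (rule bounded_invertible_id_plus_scaleC[OF A(1) K(3,4)])
    with assms(1,2) A(2) show ?thesis
      by (rule complete_riesz_add_scaleC_intertwining)
  qed
  then show thesis by (rule that[OF bounds])
qed

lemma unitary_system_clinear: "unitary_system \<U> \<Longrightarrow> U \<in> \<U> \<Longrightarrow> clinear U"
  unfolding unitary_system_def unitary_def by blast

theorem proposition3:
  fixes \<U> :: "('a::chilbert_space \<Rightarrow> 'a) set"
  assumes "separable_space (euclidean :: 'a topology)"
    and "unitary_system \<U>"
  shows "(\<forall>\<psi>1 \<psi>2. \<psi>1 \<in> complete_wandering \<U> \<and> \<psi>2 \<in> complete_wandering \<U> \<longrightarrow>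
            (\<forall>l::complex. cmod l \<noteq> 1 \<longrightarrow> \<psi>1 + l *\<^sub>C \<psi>2 \<in> complete_riesz \<U>))
       \<and> (\<forall>\<psi>1 \<psi>2. \<psi>1 \<in> complete_riesz \<U> \<and> \<psi>2 \<in> complete_riesz \<U> \<longrightarrow>
            (\<exists>a b::real. 0 < a \<and> a < b \<and>
               (\<forall>l::complex. cmod l < a \<or> cmod l > b \<longrightarrow> \<psi>1 + l *\<^sub>C \<psi>2 \<in> complete_riesz \<U>)))"
proof -
  have clinear_\<U>: "\<And>U. U \<in> \<U> \<Longrightarrow> clinear U"
    using assms(2) by (rule unitary_system_clinear)
  show ?thesis
  proof (intro conjI allI impI)
    fix \<psi>1 \<psi>2 :: 'a and l :: complex
    assume "\<psi>1 \<in> complete_wandering \<U> \<and> \<psi>2 \<in> complete_wandering \<U>" and "cmod l \<noteq> 1"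
    then show "\<psi>1 + l *\<^sub>C \<psi>2 \<in> complete_riesz \<U>"
      using complete_wandering_add_scaleC[OF clinear_\<U>] by blast
  next
    fix \<psi>1 \<psi>2 :: 'a
    assume "\<psi>1 \<in> complete_riesz \<U> \<and> \<psi>2 \<in> complete_riesz \<U>"
    then obtain a b where "0 < a" "a < b"
      "\<And>l. cmod l < a \<or> b < cmod l \<Longrightarrow> \<psi>1 + l *\<^sub>C \<psi>2 \<in> complete_riesz \<U>"
      using complete_riesz_add_scaleC[OF clinear_\<U>] by blast
    then show "\<exists>a b::real. 0 < a \<and> a < b \<and>
        (\<forall>l::complex. cmod l < a \<or> cmod l > b \<longrightarrow> \<psi>1 + l *\<^sub>C \<psi>2 \<in> complete_riesz \<U>)"
      by auto
  qed
qed

end
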